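(* Let $\mathcal{X}\subseteq\mathbb{R}^d$ be closed and convex, $p\ge2$, $\sigma>0$, and let $h:\mathcal{X}\to\mathbb{R}$ be convex, continuously differentiable and satisfy $D_h(x,y)\ge\frac{\sigma}{p}\|x-y\|^p$ for all $x,y\in\mathcal{X}$. Let $f:\mathcal{X}\to\mathbb{R}$ be convex and differentiable with minimizer $x^\ast$. Let $\delta>0$ and let $(A_k)_{k\ge0}$ be a nondecreasing sequence of positive numbers; set $\alpha_k=A_{k+1}-A_k$ and $\tau_k=\alpha_k/A_{k+1}$. Define $E_k=D_h(x^\ast,z_k)+A_k\big(f(y_k)-f(x^\ast)\big)$. (a) If sequences $(x_k),(y_k),(z_k)$ in $\mathcal{X}$ satisfy, for every $k$, $x_{k+1}=\tau_k z_k+(1-\tau_k)y_k$ and $\nabla h(z_{k+1})=\nabla h(z_k)-\alpha_k\nabla f(x_{k+1})$ (with $y_{k+1}\in\mathcal{X}$ arbitrary), then $$\frac{E_{k+1}-E_k}{\delta}\le\frac{p-1}{p}\sigma^{-\frac1{p-1}}\frac{(A_{k+1}-A_k)^{\frac p{p-1}}}{\delta}\|\nabla f(x_{k+1})\|^{\frac p{p-1}}+\frac{A_{k+1}}{\delta}\big(f(y_{k+1})-f(x_{k+1})\big).$$ (b) If instead they satisfy $x_{k+1}=\tau_k z_k+(1-\tau_k)y_k$ and $\nabla h(z_{k+1})=\nabla h(z_k)-\alpha_k\nabla f(y_{k+1})$ (with $y_{k+1}\in\mathcal{X}$ arbitrary), then $$\frac{E_{k+1}-E_k}{\delta}\le\frac{p-1}{p}\sigma^{-\frac1{p-1}}\frac{(A_{k+1}-A_k)^{\frac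 p{p-1}}}{\delta}\|\nabla f(y_{k+1})\|^{\frac p{p-1}}+\frac{A_{k+1}}{\delta}\langle\nabla f(y_{k+1}),y_{k+1}-x_{k+1}\rangle.$$
   Context: $\|\cdot\|$ is the Euclidean norm and $D_h(y,x)=h(y)-h(x)-\langle\nabla h(x),y-x\rangle$ is the Bregman divergence of $h$. *)

theory Defs
  imports "HOL-Analysis.Analysis"
begin

definition bregman :: "('a::real_inner \<Rightarrow> real) \<Rightarrow> ('a \<Rightarrow> 'a) \<Rightarrow> 'a \<Rightarrow> 'a \<Rightarrow> real" where
  "bregman h gh y x = h y - h x - inner (gh x) (y - x)"

end

theory Submission imports Defs begin

text \<open>Both estimates are instances of one inequality, valid when the mirror step uses the
  gradient g of f at an arbitrary point w of X. The mirror step turns the change of the Bregman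
  term into \<open>\<alpha> \<langle>g, x\<^sup>* - z\<rangle> - D_h(z', z)\<close>; Cauchy-Schwarz, uniform convexity of h and
  Young's inequality bound \<open>\<alpha> \<langle>g, z - z'\<rangle> - D_h(z', z)\<close> by the conjugate term
  \<open>(p-1)/p \<sigma>^(-1/(p-1)) (\<alpha>\<parallel>g\<parallel>)^(p/(p-1))\<close>. The coupling \<open>A' x' = \<alpha> z + A y\<close> moves the
  inner product to x', and the gradient inequality of f at w leaves
  \<open>A' (f y' - f w) + A' \<langle>g, w - x'\<rangle>\<close>. Taking w = x' gives (a), w = y' gives (b).\<close>

lemma convex_on_gradient_le:
  fixes f :: "'a::real_inner \<Rightarrow> real"
  assumes "convex X" "convex_on X f" "x \<in> X" "y \<in> X"
    and der: "(f has_derivative (\<lambda>v. inner g v)) (at x within X)"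
  shows "inner g (y - x) \<le> f y - f x"
proof -
  define \<gamma> where "\<gamma> t = x + t *\<^sub>R (y - x)" for t :: real
  have \<gamma>_convex_comb: "\<gamma> t = (1 - t) *\<^sub>R x + t *\<^sub>R y" for t
    by (simp add: \<gamma>_def algebra_simps)
  have \<gamma>X: "\<gamma> ` {0..1} \<subseteq> X"
    using assms(1,3,4) by (auto simp: \<gamma>_convex_comb convex_alt)
  have "(\<gamma> has_derivative (\<lambda>t. t *\<^sub>R (y - x))) (at 0 within {0..1})"
    unfolding \<gamma>_def by (auto intro!: derivative_eq_intros)
  moreover have "(f has_derivative (\<lambda>v. inner g v)) (at (\<gamma> 0) within \<gamma> ` {0..1})"
    using has_derivative_subset[OF der \<gamma>X] by (simp add: \<gamma>_def)
  ultimately have "((f \<circ> \<gamma>) has_derivative (\<lambda>t. inner g (t *\<^sub>R (y - x)))) (at 0 within {0..1})"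
    by (auto dest: has_derivative_in_compose simp: o_def)
  moreover have "(\<lambda>t. inner g (t *\<^sub>R (y - x))) = (*) (inner g (y - x))"
    by (simp add: fun_eq_iff)
  ultimately have "((f \<circ> \<gamma>) has_field_derivative inner g (y - x)) (at 0 within {0..1})"
    by (simp add: has_field_derivative_def)
  then have "((\<lambda>t. (f (\<gamma> t) - f x) / t) \<longlongrightarrow> inner g (y - x)) (at 0 within {0..1})"
    by (simp add: has_field_derivative_iff \<gamma>_def)
  moreover have "\<forall>\<^sub>F t in at 0 within {0..1}. (f (\<gamma> t) - f x) / t \<le> f y - f x"
    unfolding eventually_at_filter
  proof (intro always_eventually allI impI)
    fix t :: real assume t: "t \<noteq> 0" "t \<in> {0..1}"
    then have "f (\<gamma> t) - f x \<le> t * (f y - f x)"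
      using convex_onD[OF assms(2), of t x y] assms(3,4) by (simp add: \<gamma>_convex_comb algebra_simps)
    then show "(f (\<gamma> t) - f x) / t \<le> f y - f x"
      using t by (simp add: divide_le_eq mult.commute)
  qed
  ultimately show ?thesis
    by (intro tendsto_le[OF _ tendsto_const]) (auto simp: at_within_Icc_at_right)
qed

text \<open>The right-hand side is the convex conjugate of \<open>t \<mapsto> \<sigma>/p t^p\<close> evaluated at a.\<close>

lemma Youngs_inequality_powr_conjugate:
  fixes p \<sigma> a t :: real
  assumes p: "p > 1" and "\<sigma> > 0" "a \<ge> 0" "t \<ge> 0"
  shows "a * t - \<sigma> / p * t powr p \<le> (p - 1) / p * \<sigma> powr (-1 / (p - 1)) * a powr (p / (p - 1))"
proof -
  define q where "q = p / (p - 1)"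
  have q: "q > 1" "1 / p + 1 / q = 1" "1 / q = (p - 1) / p"
    using p by (simp_all add: q_def field_simps)
  define u where "u = \<sigma> powr (1 / p) * t"
  define v where "v = \<sigma> powr (-1 / p) * a"
  have "u * v = a * t"
    using assms by (simp add: u_def v_def powr_minus field_simps)
  moreover have "u powr p = \<sigma> * t powr p"
    using assms by (simp add: u_def powr_mult powr_powr)
  moreover have "v powr q = \<sigma> powr (-1 / (p - 1)) * a powr q"
    using assms by (simp add: v_def powr_mult powr_powr q_def)
  moreover have "u * v \<le> u powr p / p + v powr q / q"
    using assms q by (intro Youngs_inequality) (auto simp: u_def v_def)
  ultimately show ?thesis
    using q(3) unfolding q_def by (simp add: field_simps)
qed

lemma bregman_mirror_step_le:
  fixes gh :: "'a::real_inner \<Rightarrow> 'a" and h :: "'a \<Rightarrow> real"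
  assumes p: "p > 1" and \<sigma>: "\<sigma> > 0" and \<alpha>: "\<alpha> \<ge> 0"
    and unif: "bregman h gh z' z \<ge> \<sigma> / p * norm (z' - z) powr p"
    and step: "gh z' = gh z - \<alpha> *\<^sub>R g"
  shows "bregman h gh u z' - bregman h gh u z
    \<le> \<alpha> * inner g (u - z) + (p - 1) / p * \<sigma> powr (-1 / (p - 1)) * \<alpha> powr (p / (p - 1)) * norm g powr (p / (p - 1))"
proof -
  let ?r = "norm (z' - z)"
  have "bregman h gh u z' - bregman h gh u z = \<alpha> * inner g (u - z') - bregman h gh z' z"
    unfolding bregman_def step by (simp add: inner_diff_left inner_diff_right algebra_simps)
  also have "\<alpha> * inner g (u - z') = \<alpha> * inner g (u - z) + \<alpha> * inner g (z - z')"
    by (simp add: inner_diff_right algebra_simps)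
  also have "\<alpha> * inner g (z - z') \<le> \<alpha> * norm g * ?r"
    using mult_left_mono[OF norm_cauchy_schwarz[of g "z - z'"] \<alpha>]
    by (simp add: norm_minus_commute mult.assoc)
  finally have "bregman h gh u z' - bregman h gh u z
      \<le> \<alpha> * inner g (u - z) + (\<alpha> * norm g * ?r - \<sigma> / p * ?r powr p)"
    using unif by linarith
  also have "\<alpha> * norm g * ?r - \<sigma> / p * ?r powr p
      \<le> (p - 1) / p * \<sigma> powr (-1 / (p - 1)) * (\<alpha> * norm g) powr (p / (p - 1))"
    using p \<sigma> \<alpha> by (intro Youngs_inequality_powr_conjugate) auto
  finally show ?thesis
    using \<alpha> by (simp add: powr_mult mult.assoc)
qed

lemma inner_coupling_eq:
  fixes g x' y z u :: "'a::real_inner"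
  assumes "A' > 0"
    and x': "x' = ((A' - A) / A') *\<^sub>R z + (1 - (A' - A) / A') *\<^sub>R y"
  shows "(A' - A) * inner g (u - z) = (A' - A) * inner g (u - x') + A * inner g (y - x')"
proof -
  have "A' * ((A' - A) / A') = A' - A" "A' * (1 - (A' - A) / A') = A"
    using \<open>A' > 0\<close> by (simp_all add: field_simps)
  then have "A' *\<^sub>R x' = (A' - A) *\<^sub>R z + A *\<^sub>R y"
    unfolding x' scaleR_add_right scaleR_scaleR by simp
  then have "(A' - A) * inner g z = A' * inner g x' - A * inner g y"
    by (metis add_diff_cancel_right' inner_diff_right inner_scaleR_right)
  then show ?thesis
    by (simp add: inner_diff_right algebra_simps)
qed

lemma energy_step_le:
  fixes f h :: "'a::real_inner \<Rightarrow> real" and gh :: "'a \<Rightarrow> 'a"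
  assumes "convex X" "convex_on X f" "xstar \<in> X"
    and p: "p > 1" and \<sigma>: "\<sigma> > 0" and A: "0 < A" "A \<le> A'"
    and X: "w \<in> X" "y \<in> X"
    and grad: "(f has_derivative (\<lambda>v. inner g v)) (at w within X)"
    and coupling: "x' = ((A' - A) / A') *\<^sub>R z + (1 - (A' - A) / A') *\<^sub>R y"
    and unif: "bregman h gh z' z \<ge> \<sigma> / p * norm (z' - z) powr p"
    and mirror: "gh z' = gh z - (A' - A) *\<^sub>R g"
  shows "(bregman h gh xstar z' + A' * (f y' - f xstar)) - (bregman h gh xstar z + A * (f y - f xstar))
    \<le> (p - 1) / p * \<sigma> powr (-1 / (p - 1)) * (A' - A) powr (p / (p - 1)) * norm g powr (p / (p - 1))
      + A' * (f y' - f w) + A' * inner g (w - x')"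
proof -
  have "bregman h gh xstar z' - bregman h gh xstar z
    \<le> (A' - A) * inner g (xstar - z)
      + (p - 1) / p * \<sigma> powr (-1 / (p - 1)) * (A' - A) powr (p / (p - 1)) * norm g powr (p / (p - 1))"
    using p \<sigma> A unif mirror by (intro bregman_mirror_step_le) auto
  moreover have "(A' - A) * inner g (xstar - z) = (A' - A) * inner g (xstar - x') + A * inner g (y - x')"
    using A coupling by (intro inner_coupling_eq) auto
  moreover have "(A' - A) * inner g (xstar - w) \<le> (A' - A) * (f xstar - f w)"
    using assms(1-3) A X grad by (intro mult_left_mono convex_on_gradient_le) auto
  moreover have "A * inner g (y - w) \<le> A * (f y - f w)"
    using assms(1,2) A X grad by (intro mult_left_mono convex_on_gradient_le) auto
  moreover have "inner g (xstar - x') = inner g (xstar - w) + inner g (w - x')"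
    and "inner g (y - x') = inner g (y - w) + inner g (w - x')"
    by (simp_all add: inner_diff_right)
  ultimately show ?thesis
    by (simp add: algebra_simps)
qed

theorem proposition5:
  fixes X :: "'a::euclidean_space set"
    and h f :: "'a \<Rightarrow> real" and gh gf :: "'a \<Rightarrow> 'a"
    and p \<sigma> \<delta> :: real and xstar :: 'a and A :: "nat \<Rightarrow> real"
  assumes X: "closed X" "convex X"
    and p: "p \<ge> 2" and \<sigma>: "\<sigma> > 0"
    and h_convex: "convex_on X h"
    and h_grad: "\<And>x. x \<in> X \<Longrightarrow> (h has_derivative (\<lambda>v. inner (gh x) v)) (at x within X)"
    and h_C1: "continuous_on X gh"
    and h_unif: "\<And>x y. x \<in> X \<Longrightarrow> y \<in> X \<Longrightarrow> bregman h gh x y \<ge> \<sigma> / p * norm (x - y) powr p"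
    and f_convex: "convex_on X f"
    and f_grad: "\<And>x. x \<in> X \<Longrightarrow> (f has_derivative (\<lambda>v. inner (gf x) v)) (at x within X)"
    and xstar: "xstar \<in> X" "\<And>x. x \<in> X \<Longrightarrow> f xstar \<le> f x"
    and \<delta>: "\<delta> > 0"
    and A_pos: "\<And>k. A k > 0" and A_mono: "mono A"
  shows
   "(\<forall>x y z :: nat \<Rightarrow> 'a.
       (\<forall>k. x k \<in> X \<and> y k \<in> X \<and> z k \<in> X) \<and>
       (\<forall>k. x (Suc k) = ((A (Suc k) - A k) / A (Suc k)) *\<^sub>R z k
                         + (1 - (A (Suc k) - A k) / A (Suc k)) *\<^sub>R y k) \<and>
       (\<forall>k. gh (z (Suc k)) = gh (z k) - (A (Suc k) - A k) *\<^sub>R gf (x (Suc k)))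
     \<longrightarrow> (\<forall>k.
       ((bregman h gh xstar (z (Suc k)) + A (Suc k) * (f (y (Suc k)) - f xstar))
        - (bregman h gh xstar (z k) + A k * (f (y k) - f xstar))) / \<delta>
       \<le> (p - 1) / p * \<sigma> powr (- 1 / (p - 1)) * (A (Suc k) - A k) powr (p / (p - 1)) / \<delta>
            * norm (gf (x (Suc k))) powr (p / (p - 1))
         + A (Suc k) / \<delta> * (f (y (Suc k)) - f (x (Suc k)))))
    \<and>
   (\<forall>x y z :: nat \<Rightarrow> 'a.
       (\<forall>k. x k \<in> X \<and> y k \<in> X \<and> z k \<in> X) \<and>
       (\<forall>k. x (Suc k) = ((A (Suc k) - A k) / A (Suc k)) *\<^sub>R z k
                         + (1 - (A (Suc k) - A k) / A (Suc k)) *\<^sub>R y k) \<and>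
       (\<forall>k. gh (z (Suc k)) = gh (z k) - (A (Suc k) - A k) *\<^sub>R gf (y (Suc k)))
     \<longrightarrow> (\<forall>k.
       ((bregman h gh xstar (z (Suc k)) + A (Suc k) * (f (y (Suc k)) - f xstar))
        - (bregman h gh xstar (z k) + A k * (f (y k) - f xstar))) / \<delta>
       \<le> (p - 1) / p * \<sigma> powr (- 1 / (p - 1)) * (A (Suc k) - A k) powr (p / (p - 1)) / \<delta>
            * norm (gf (y (Suc k))) powr (p / (p - 1))
         + A (Suc k) / \<delta> * inner (gf (y (Suc k))) (y (Suc k) - x (Suc k))))"
proof -
  have "p > 1" using p by simp
  have A_step: "A k \<le> A (Suc k)" for k
    using A_mono by (simp add: mono_def)
  have scaled: "(E' - E) / \<delta> \<le> C * a / \<delta> * b + A' / \<delta> * c"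
    if "E' - E \<le> C * a * b + A' * c" for E' E C a b A' c :: real
    using divide_right_mono[OF that, of \<delta>] \<delta> by (simp add: add_divide_distrib)
  note step = energy_step_le[OF X(2) f_convex xstar(1) \<open>p > 1\<close> \<sigma> A_pos A_step]
  show ?thesis
  proof ((intro conjI allI impI; elim conjE), goal_cases)
    case (1 x y z k)
    then have "x (Suc k) \<in> X" "y k \<in> X" "z (Suc k) \<in> X" "z k \<in> X"
      by blast+
    from step[where y' = "y (Suc k)", OF this(1,2) f_grad[OF this(1)] 1(2)[rule_format]
        h_unif[OF this(3,4)] 1(3)[rule_format]]
    show ?case
      by (intro scaled) simp
  next
    case (2 x y z k)
    then have "y (Suc k) \<in> X" "y k \<in> X" "z (Suc k) \<in> X" "z k \<in> X"
      by blast+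
    from step[where y' = "y (Suc k)", OF this(1,2) f_grad[OF this(1)] 2(2)[rule_format]
        h_unif[OF this(3,4)] 2(3)[rule_format]]
    show ?case
      by (intro scaled) simp
  qed
qed

end
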